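(* For any positive integers $a,b,n$, in $\mathfrak{h}^1_t$, $$\sum_{m=1}^nd_m(t)\,z_{b+(m-1)a}\ast_t z_a^{n-m}=\sum_{m=0}^{n-1}z_a^mz_bz_a^{n-1-m}.$$
   Context: $d_m(t)=t^m-(t-1)^m$. $\mathfrak{h}_t=\mathbb{Q}[t]\langle x,y\rangle$ ($1$ = empty word), $\mathfrak{h}^1_t=\mathbb{Q}[t]+\mathfrak{h}_ty$, $z_k=x^{k-1}y$, and $z_a^j$ is the concatenation power. For a word $w$, $\delta(w)=1$ if $w=1$, else $0$. The $t$-harmonic product $\ast_t$ on $\mathfrak{h}^1_t$ is the $\mathbb{Q}[t]$-bilinear product with $1\ast_t w=w\ast_t1=w$ and, for words $w_1,w_2\in\mathfrak{h}^1_t$ and $k,l\ge1$, $z_kw_1\ast_t z_lw_2=z_k(w_1\ast_t z_lw_2)+z_l(z_kw_1\ast_t w_2)+(1-2t)z_{k+l}(w_1\ast_t w_2)+[1-\delta(w_1)\delta(w_2)](t^2-t)x^{k+l}(w_1\ast_t w_2)$. *)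

theory Defs
  imports "HOL-Computational_Algebra.Polynomial" "HOL-Library.Function_Algebras"
begin

text \<open>Letters of the alphabet {x,y}; words are letter lists (empty list = 1).
An element of Q[t]<x,y> is represented by its coefficient function
word => rat poly (all elements constructed below have finite support).
Addition / zero / finite sums are pointwise (Function_Algebras).\<close>

datatype letter = X | Y

type_synonym elt = "letter list \<Rightarrow> rat poly"

definition tvar :: "rat poly" where "tvar = [:0, 1:]"

definition d :: "nat \<Rightarrow> rat poly" where
  "d m = tvar ^ m - (tvar - 1) ^ m"

definition wd :: "letter list \<Rightarrow> elt" where
  "wd v = (\<lambda>w. if w = v then 1 else 0)"

definition smult_e :: "rat poly \<Rightarrow> elt \<Rightarrow> elt" where
  "smult_e c f = (\<lambda>w. c * f w)"

text \<open>left concatenation by a word u, extended linearly\<close>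
definition lmul :: "letter list \<Rightarrow> elt \<Rightarrow> elt" where
  "lmul u f = (\<lambda>w. if take (length u) w = u then f (drop (length u) w) else 0)"

definition z :: "nat \<Rightarrow> letter list" where
  "z k = replicate (k - 1) X @ [Y]"

definition xpow :: "nat \<Rightarrow> letter list" where
  "xpow j = replicate j X"

definition zpow :: "nat \<Rightarrow> nat \<Rightarrow> letter list" where
  "zpow a j = concat (replicate j (z a))"

text \<open>t-harmonic product of two words of h^1_t (words ending in y, or empty).
A nonempty word u of h^1 is uniquely z_k w1 with k-1 = number of leading x's.\<close>
function hst :: "letter list \<Rightarrow> letter list \<Rightarrow> elt" where
  "hst u v =
    (if u = [] then wd v else if v = [] then wd u else
     (let k = length (takeWhile (\<lambda>c. c = X) u) + 1; w1 = drop k u;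
          l = length (takeWhile (\<lambda>c. c = X) v) + 1; w2 = drop l v
      in lmul (z k) (hst w1 v)
         + lmul (z l) (hst u w2)
         + smult_e (1 - 2 * tvar) (lmul (z (k + l)) (hst w1 w2))
         + smult_e (if w1 = [] \<and> w2 = [] then 0 else tvar ^ 2 - tvar)
                   (lmul (xpow (k + l)) (hst w1 w2))))"
  by pat_completeness auto
termination
  by (relation "measure (\<lambda>(u, v). length u + length v)") (auto simp: Let_def intro!: add_less_le_mono diff_less)

end

theory Submission imports Defs begin

text \<open>Both sides satisfy the recursion S(n+1) = z_b z_a^n + z_a S(n). For the right-hand side this
is just splitting off the term m = 0. For the left-hand side, expanding z_c \<ast>_t z_a^(j+1) by the
defining rule of \<ast>_t produces z_a (z_c \<ast>_t z_a^j) plus three words z_c z_a^(j+1),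
(1 - 2t) z_(c+a) z_a^j and (t^2 - t) z_(c+2a) z_a^(j-1); weighted by d_m these telescope to the
single word z_b z_a^n because d_(m+2) + (1 - 2t) d_(m+1) + (t^2 - t) d_m = 0, d_0 = 0, d_1 = 1.\<close>

lemma z_not_Nil: "z c \<noteq> []"
  by (simp add: z_def)

lemma length_z: "c \<ge> 1 \<Longrightarrow> length (z c) = c"
  by (simp add: z_def)

lemma takeWhile_X_z_append: "takeWhile (\<lambda>x. x = X) (z c @ w) = replicate (c - 1) X"
  by (simp add: z_def takeWhile_append)

lemma xpow_append_z: "a \<ge> 1 \<Longrightarrow> xpow k @ z a = z (k + a)"
  by (simp add: xpow_def z_def replicate_add[symmetric])

lemma zpow_0 [simp]: "zpow a 0 = []"
  by (simp add: zpow_def)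

lemma zpow_Suc: "zpow a (Suc j) = z a @ zpow a j"
  by (simp add: zpow_def)

lemma zpow_eq_Nil_iff: "zpow a j = [] \<longleftrightarrow> j = 0"
  by (cases j) (simp_all add: zpow_Suc z_not_Nil)

lemma hst_Nil_left [simp]: "hst [] v = wd v"
  by (subst hst.simps) simp

lemma hst_Nil_right [simp]: "hst u [] = wd u"
  by (subst hst.simps) simp

text \<open>Constant coefficient functions embed \<open>rat poly\<close> into \<open>elt\<close> as a ring homomorphism,
turning \<open>smult_e\<close> into multiplication in the commutative ring \<open>elt\<close>.\<close>

definition const_e :: "rat poly \<Rightarrow> elt" where
  "const_e c = (\<lambda>_. c)"

lemma const_e_0: "const_e 0 = 0"
  by (simp add: const_e_def zero_fun_def)

lemma const_e_1: "const_e 1 = 1"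
  by (simp add: const_e_def one_fun_def)

lemma const_e_add: "const_e (p + q) = const_e p + const_e q"
  by (simp add: const_e_def plus_fun_def)

lemma const_e_mult: "const_e (p * q) = const_e p * const_e q"
  by (simp add: const_e_def times_fun_def)

lemma smult_e_eq_const_e_mult: "smult_e c f = const_e c * f"
  by (simp add: smult_e_def times_fun_def const_e_def)

lemma lmul_0: "lmul u 0 = 0"
  by (simp add: lmul_def fun_eq_iff)

lemma lmul_add: "lmul u (f + g) = lmul u f + lmul u g"
  by (simp add: lmul_def plus_fun_def fun_eq_iff)

lemma lmul_const_e_mult: "lmul u (const_e c * f) = const_e c * lmul u f"
  by (simp add: lmul_def times_fun_def const_e_def fun_eq_iff)

lemma lmul_sum: "lmul u (sum f A) = (\<Sum>i\<in>A. lmul u (f i))"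
  by (induction A rule: infinite_finite_induct) (metis sum.infinite lmul_0, metis sum.empty lmul_0, metis sum.insert lmul_add)

lemma lmul_wd: "lmul u (wd v) = wd (u @ v)"
  by (auto simp add: lmul_def wd_def fun_eq_iff append_eq_conv_conj) (metis append_take_drop_id)

lemma d_0: "d 0 = 0"
  by (simp add: d_def)

lemma d_1: "d (Suc 0) = 1"
  by (simp add: d_def)

lemma d_recurrence: "d (Suc (Suc m)) + (1 - 2 * tvar) * d (Suc m) + (tvar^2 - tvar) * d m = 0"
  by (simp add: d_def algebra_simps power2_eq_square)

lemma const_e_d_recurrence:
  "const_e (d (Suc (Suc m))) + const_e (1 - 2 * tvar) * const_e (d (Suc m))
     + const_e (tvar^2 - tvar) * const_e (d m) = 0"
  using arg_cong[OF d_recurrence[of m], of const_e] by (simp only: const_e_add const_e_mult const_e_0)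

lemma hst_z_zpow_Suc:
  assumes "c \<ge> 1" and "a \<ge> 1"
  shows "hst (z c) (zpow a (Suc j)) =
           wd (z c @ zpow a (Suc j)) + lmul (z a) (hst (z c) (zpow a j))
         + const_e (1 - 2 * tvar) * wd (z (c + a) @ zpow a j)
         + (if j = 0 then 0 else const_e (tvar^2 - tvar) * wd (z (c + 2 * a) @ zpow a (j - 1)))"
proof -
  have k: "length (takeWhile (\<lambda>x. x = X) (z c)) + 1 = c"
    using takeWhile_X_z_append[of c "[]"] assms by simp
  have l: "length (takeWhile (\<lambda>x. x = X) (zpow a (Suc j))) + 1 = a"
    using takeWhile_X_z_append[of a] assms by (simp add: zpow_Suc)
  have w1: "drop c (z c) = []" and w2: "drop a (zpow a (Suc j)) = zpow a j"
    using length_z assms by (simp_all add: zpow_Suc)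
  have "hst (z c) (zpow a (Suc j)) =
           lmul (z c) (wd (zpow a (Suc j))) + lmul (z a) (hst (z c) (zpow a j))
         + smult_e (1 - 2 * tvar) (lmul (z (c + a)) (wd (zpow a j)))
         + smult_e (if j = 0 then 0 else tvar^2 - tvar) (lmul (xpow (c + a)) (wd (zpow a j)))"
    by (subst hst.simps, simp only: k l w1 w2 Let_def) (simp add: z_not_Nil zpow_eq_Nil_iff zpow_Suc)
  moreover have "xpow (c + a) @ zpow a (Suc j') = z (c + 2 * a) @ zpow a j'" for j'
    using xpow_append_z[OF assms(2), of "c + a"] by (simp add: zpow_Suc mult_2 add.assoc)
  ultimately show ?thesis
    by (cases j) (simp_all add: smult_e_eq_const_e_mult lmul_wd const_e_0)
qed

lemma hst_z_zpow_Suc_reindexed: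
  assumes a: "a \<ge> 1" and b: "b \<ge> 1" and m: "m \<in> {1..Suc N}"
  shows "hst (z (b + (m - 1) * a)) (zpow a (Suc (Suc N) - m)) =
           wd (z (b + (m - 1) * a) @ zpow a (Suc (Suc N) - m))
         + lmul (z a) (hst (z (b + (m - 1) * a)) (zpow a (Suc N - m)))
         + const_e (1 - 2 * tvar) * wd (z (b + (Suc m - 1) * a) @ zpow a (Suc (Suc N) - Suc m))
         + (if m = Suc N then 0 else const_e (tvar^2 - tvar)
              * wd (z (b + (Suc (Suc m) - 1) * a) @ zpow a (Suc (Suc N) - Suc (Suc m))))"
proof -
  have c: "b + (m - 1) * a \<ge> 1" using b by simp
  have j: "Suc (Suc N) - m = Suc (Suc N - m)" and j0: "Suc N - m = 0 \<longleftrightarrow> m = Suc N"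
    using m by auto
  have "b + (m - 1) * a + a = b + (Suc m - 1) * a"
    and "b + (m - 1) * a + 2 * a = b + (Suc (Suc m) - 1) * a"
    using m by (cases m; simp)+
  moreover have "Suc N - m = Suc (Suc N) - Suc m" and "Suc N - m - 1 = Suc (Suc N) - Suc (Suc m)"
    by simp_all
  ultimately show ?thesis
    unfolding j hst_z_zpow_Suc[OF c a] j0 by (simp only: j)
qed

lemma sum_linear_recurrence_telescope:
  fixes D g :: "nat \<Rightarrow> 'a::comm_ring_1"
  assumes D0: "D 0 = 0" and D1: "D (Suc 0) = 1"
    and recurrence: "\<And>m. D (Suc (Suc m)) + A * D (Suc m) + B * D m = 0"
  shows "(\<Sum>m=1..Suc L. D m * g m) + A * (\<Sum>m=1..L. D m * g (Suc m))
       + B * (\<Sum>m=1..L-1. D m * g (Suc (Suc m))) = g 1"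
proof (induction L)
  case 0
  then show ?case by (simp add: D1)
next
  case (Suc L)
  have "(\<Sum>m=1..Suc (Suc L). D m * g m) + A * (\<Sum>m=1..Suc L. D m * g (Suc m))
          + B * (\<Sum>m=1..Suc L-1. D m * g (Suc (Suc m)))
      = ((\<Sum>m=1..Suc L. D m * g m) + A * (\<Sum>m=1..L. D m * g (Suc m))
          + B * (\<Sum>m=1..L-1. D m * g (Suc (Suc m))))
        + (D (Suc (Suc L)) + A * D (Suc L) + B * D L) * g (Suc (Suc L))"
    by (cases L) (simp_all add: D0 algebra_simps)
  then show ?case
    by (simp only: Suc.IH recurrence) simp
qed

lemma sum_zpow_z_zpow_Suc:
  "(\<Sum>m=0..Suc N. wd (zpow a m @ z b @ zpow a (Suc N - m)))
     = wd (z b @ zpow a (Suc N)) + lmul (z a) (\<Sum>m=0..N. wd (zpow a m @ z b @ zpow a (N - m)))"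
  by (subst sum.atLeast0_atMost_Suc_shift)
     (simp add: lmul_sum lmul_wd zpow_Suc del: sum.cl_ivl_Suc)

definition weighted_hst_sum :: "nat \<Rightarrow> nat \<Rightarrow> nat \<Rightarrow> elt" where
  "weighted_hst_sum a b n =
     (\<Sum>m=1..n. const_e (d m) * hst (z (b + (m - 1) * a)) (zpow a (n - m)))"

lemma weighted_hst_sum_Suc:
  assumes a: "a \<ge> 1" and b: "b \<ge> 1"
  shows "weighted_hst_sum a b (Suc (Suc N))
           = wd (z b @ zpow a (Suc N)) + lmul (z a) (weighted_hst_sum a b (Suc N))"
proof -
  define D where "D m = const_e (d m)" for m
  define P where "P m j = hst (z (b + (m - 1) * a)) (zpow a j)" for m j
  define W where "W m = wd (z (b + (m - 1) * a) @ zpow a (Suc (Suc N) - m))" for m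
  define A where "A = const_e (1 - 2 * tvar)"
  define B where "B = const_e (tvar^2 - tvar)"
  have P_step: "P m (Suc (Suc N) - m) = W m + lmul (z a) (P m (Suc N - m)) + A * W (Suc m)
                  + (if m = Suc N then 0 else B * W (Suc (Suc m)))"
    if "m \<in> {1..Suc N}" for m
    using hst_z_zpow_Suc_reindexed[OF a b] that by (simp only: P_def W_def A_def B_def)
  have "weighted_hst_sum a b (Suc (Suc N))
      = (\<Sum>m=1..Suc N. D m * P m (Suc (Suc N) - m)) + D (Suc (Suc N)) * W (Suc (Suc N))"
    by (simp add: weighted_hst_sum_def D_def P_def W_def)
  also have "(\<Sum>m=1..Suc N. D m * P m (Suc (Suc N) - m))
      = (\<Sum>m=1..Suc N. D m * W m) + lmul (z a) (\<Sum>m=1..Suc N. D m * P m (Suc N - m))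
        + A * (\<Sum>m=1..Suc N. D m * W (Suc m))
        + B * (\<Sum>m=1..Suc N. D m * (if m = Suc N then 0 else W (Suc (Suc m))))"
  proof -
    have "(\<Sum>m=1..Suc N. D m * P m (Suc (Suc N) - m))
        = (\<Sum>m=1..Suc N. D m * W m + lmul (z a) (D m * P m (Suc N - m)) + A * (D m * W (Suc m))
             + B * (D m * (if m = Suc N then 0 else W (Suc (Suc m)))))"
      by (rule sum.cong) (simp_all only: P_step D_def lmul_const_e_mult, simp_all add: algebra_simps)
    then show ?thesis
      by (simp only: sum.distrib sum_distrib_left lmul_sum)
  qed
  also have "(\<Sum>m=1..Suc N. D m * (if m = Suc N then 0 else W (Suc (Suc m))))
      = (\<Sum>m=1..Suc N - 1. D m * W (Suc (Suc m)))"
    by simp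
  also have "(\<Sum>m=1..Suc N. D m * P m (Suc N - m)) = weighted_hst_sum a b (Suc N)"
    by (simp add: weighted_hst_sum_def D_def P_def)
  moreover have "(\<Sum>m=1..Suc (Suc N). D m * W m)
      = (\<Sum>m=1..Suc N. D m * W m) + D (Suc (Suc N)) * W (Suc (Suc N))"
    by (rule sum.cl_ivl_Suc[THEN trans]) simp
  ultimately have "weighted_hst_sum a b (Suc (Suc N))
      = ((\<Sum>m=1..Suc (Suc N). D m * W m) + A * (\<Sum>m=1..Suc N. D m * W (Suc m))
         + B * (\<Sum>m=1..Suc N - 1. D m * W (Suc (Suc m))))
        + lmul (z a) (weighted_hst_sum a b (Suc N))"
    by (simp only: add_ac)
  also have "(\<Sum>m=1..Suc (Suc N). D m * W m) + A * (\<Sum>m=1..Suc N. D m * W (Suc m))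
         + B * (\<Sum>m=1..Suc N - 1. D m * W (Suc (Suc m))) = W 1"
    by (rule sum_linear_recurrence_telescope)
       (simp_all add: D_def A_def B_def d_0 d_1 const_e_0 const_e_1 const_e_d_recurrence)
  also have "W 1 = wd (z b @ zpow a (Suc N))"
    by (simp add: W_def)
  finally show ?thesis .
qed

lemma weighted_hst_sum_eq:
  assumes "a \<ge> 1" and "b \<ge> 1"
  shows "weighted_hst_sum a b (Suc N) = (\<Sum>m=0..N. wd (zpow a m @ z b @ zpow a (N - m)))"
proof (induction N)
  case 0
  then show ?case by (simp add: weighted_hst_sum_def d_1 const_e_1)
next
  case (Suc N)
  then show ?case
    using weighted_hst_sum_Suc[OF assms] sum_zpow_z_zpow_Suc by simp
qed

theorem lemma4p1:
  fixes a b n :: nat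
  assumes "a \<ge> 1" and "b \<ge> 1" and "n \<ge> 1"
  shows "(\<Sum>m = 1..n. smult_e (d m) (hst (z (b + (m - 1) * a)) (zpow a (n - m))))
       = (\<Sum>m = 0..n - 1. wd (zpow a m @ z b @ zpow a (n - 1 - m)))"
proof -
  obtain N where "n = Suc N"
    using assms(3) by (cases n) auto
  then show ?thesis
    using weighted_hst_sum_eq[OF assms(1,2), of N]
    by (simp add: weighted_hst_sum_def smult_e_eq_const_e_mult)
qed

end
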